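(* Let $b\ge2$ be an integer and let $w$ be a fixed block of $b$-ary digits of length $p\ge1$. For every $k\ge0$, the power series $Z_w(k)$ has radius of convergence at least $(b^p-1)^{-1/p}$. Moreover, for every $k\ge0$, $$\sum_{0\le j\le k}Z_w(j)(b^{-1})\le p\,(k+1)\,b^p.$$
   Context: Strings are finite sequences over $\{0,\dots,b-1\}$, including the empty string. $k_w(X)$ is the number of possibly overlapping occurrences of $w$ in the string $X$. $N_w(k,l)$ is the number of strings $X$ of length $l$ with $k_w(X)=k$, and $Z_w(k)=\sum_{l\ge0}N_w(k,l)t^l\in\mathbb{Z}[[t]]$. *)

theory Defs
  imports "HOL-Analysis.Analysis"
begin

definition occ :: "nat list \<Rightarrow> nat list \<Rightarrow> nat" where
  "occ w X = card {i. i + length w \<le> length X \<and> take (length w) (drop i X) = w}"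

definition Ncount :: "nat \<Rightarrow> nat list \<Rightarrow> nat \<Rightarrow> nat \<Rightarrow> nat" where
  "Ncount b w k l = card {X :: nat list. length X = l \<and> set X \<subseteq> {..<b} \<and> occ w X = k}"

definition Zcoeff :: "nat \<Rightarrow> nat list \<Rightarrow> nat \<Rightarrow> nat \<Rightarrow> real" where
  "Zcoeff b w k l = real (Ncount b w k l)"

definition Zval :: "nat \<Rightarrow> nat list \<Rightarrow> nat \<Rightarrow> real \<Rightarrow> real" where
  "Zval b w k t = (\<Sum>l. Zcoeff b w k l * t ^ l)"

end

theory Submission
  imports Defs
begin

(* Cut a string of length l = m p + r into m aligned blocks of length p followed by a tail of
   length r.  Every block equal to w is an occurrence of w, so the strings with at most k
   occurrences are among those with at most k matching blocks.  The blocks are independent, so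
   the fraction F k m of the latter strings obeys F k (m+1) <= q F (k-1) m + (1 - q) F k m with
   q = b^-p.  This recursion gives the count bound (m+1)^k (b^p-1)^m b^r, a polynomial in l times
   ((b^p-1)^(1/p))^l, and also sum_m F k m <= (k+1)/q; summing the latter over the p possible
   tails r bounds sum_(j<=k) Z_w(j)(1/b). *)

lemma sum_lessThan_le_of_convex_step:
  fixes g h :: "nat \<Rightarrow> real"
  assumes "0 < q" "q \<le> 1" "g 0 \<le> 1" "\<And>m. 0 \<le> g m"
    and step: "\<And>m. g (Suc m) \<le> q * h m + (1 - q) * g m"
    and h_sums: "\<And>M. sum h {..<M} \<le> K / q"
  shows "sum g {..<M} \<le> (K + 1) / q"
proof -
  have "q * sum g {..<Suc M} \<le> K + 1" for M
  proof -
    have "sum g {..<Suc M} = g 0 + (\<Sum>m<M. g (Suc m))"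
      by (rule sum.lessThan_Suc_shift)
    also have "\<dots> \<le> 1 + (\<Sum>m<M. q * h m + (1 - q) * g m)"
      using assms(3) step by (intro add_mono sum_mono)
    also have "\<dots> = 1 + (q * sum h {..<M} + (1 - q) * sum g {..<M})"
      by (simp add: sum.distrib sum_distrib_left)
    also have "\<dots> \<le> 1 + (K + (1 - q) * sum g {..<Suc M})"
      using mult_left_mono[OF h_sums[of M], of q] assms
      by (intro add_mono mult_left_mono sum_mono2) auto
    finally show ?thesis
      by (simp add: algebra_simps)
  qed
  moreover have "sum g {..<M} \<le> sum g {..<Suc M}"
    by (intro sum_mono2) (auto simp: assms(4))
  ultimately have "q * sum g {..<M} \<le> K + 1"
    using assms(1) by (meson mult_left_mono less_imp_le order_trans)
  then show ?thesis
    using assms(1) by (simp add: pos_le_divide_eq mult.commute)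
qed

lemma sum_lessThan_mult_eq:
  fixes f :: "nat \<Rightarrow> 'a :: comm_monoid_add"
  shows "sum f {..<n * p} = (\<Sum>m<n. \<Sum>r<p. f (m * p + r))"
  by (simp add: sum.nat_group[symmetric] sum.atLeastLessThan_shift_0[of _ "_ * p"]
      atLeast0LessThan add.commute)

lemma conv_radius_le_of_norm_le:
  fixes a c :: "nat \<Rightarrow> 'a :: {banach, real_normed_div_algebra}"
  assumes "\<And>n. norm (a n) \<le> norm (c n)"
  shows "conv_radius c \<le> conv_radius a"
proof (rule conv_radius_geI_ex')
  fix r :: real assume "0 < r" "ereal r < conv_radius c"
  then have "summable (\<lambda>n. norm (c n * of_real r ^ n))"
    by (intro abs_summable_in_conv_radius) simp
  then show "summable (\<lambda>n. a n * of_real r ^ n)"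
    by (rule summable_comparison_test') (simp add: norm_mult assms mult_right_mono)
qed

lemma conv_radius_Suc_power: "conv_radius (\<lambda>n. real (Suc n) ^ k) = 1"
proof (rule conv_radius_ratio_limit_nonzero[where c = 1])
  have "(\<lambda>n. real (Suc n) / real (Suc (Suc n))) \<longlonglongrightarrow> 1"
    using LIMSEQ_Suc[OF LIMSEQ_n_over_Suc_n[where 'a = real]] by simp
  then have "(\<lambda>n. (real (Suc n) / real (Suc (Suc n))) ^ k) \<longlonglongrightarrow> 1 ^ k"
    by (rule tendsto_power)
  then show "(\<lambda>n. norm (real (Suc n) ^ k) / norm (real (Suc (Suc n)) ^ k)) \<longlonglongrightarrow> 1"
    by (simp add: power_divide)
qed auto

lemma conv_radius_poly_exp:
  fixes C \<gamma> :: real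
  assumes "C \<noteq> 0" "0 < \<gamma>"
  shows "conv_radius (\<lambda>n. C * (real (Suc n) ^ k * \<gamma> ^ n)) = ereal (1 / \<gamma>)"
  using assms conv_radius_Suc_power[of k]
  by (simp add: conv_radius_cmult_left conv_radius_mult_power_right one_ereal_def)

definition strings :: "nat \<Rightarrow> nat \<Rightarrow> nat list set" where
  "strings b n = {X. length X = n \<and> set X \<subseteq> {..<b}}"

lemma finite_strings: "finite (strings b n)"
  using finite_lists_length_eq[of "{..<b}" n] unfolding strings_def by (simp add: conj_commute)

lemma card_strings: "card (strings b n) = b ^ n"
  using card_lists_length_eq[of "{..<b}" n] unfolding strings_def by (simp add: conj_commute)

lemma Ncount_eq_card_strings: "Ncount b w k l = card {X \<in> strings b l. occ w X = k}"
  unfolding Ncount_def strings_def by (simp add: conj_assoc)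

lemma sum_Ncount_atMost: "(\<Sum>j\<le>k. Ncount b w j l) = card {X \<in> strings b l. occ w X \<le> k}"
proof (induction k)
  case 0
  then show ?case by (simp add: Ncount_eq_card_strings)
next
  case (Suc k)
  have "{X \<in> strings b l. occ w X \<le> Suc k}
      = {X \<in> strings b l. occ w X \<le> k} \<union> {X \<in> strings b l. occ w X = Suc k}"
    by auto
  moreover have "card ({X \<in> strings b l. occ w X \<le> k} \<union> {X \<in> strings b l. occ w X = Suc k})
      = card {X \<in> strings b l. occ w X \<le> k} + card {X \<in> strings b l. occ w X = Suc k}"
    by (rule card_Un_disjoint) (use finite_strings in auto)
  ultimately show ?case using Suc by (simp add: Ncount_eq_card_strings)
qed

lemma occ_append_ge:
  assumes "length u = length w" "w \<noteq> []"
  shows "of_bool (u = w) + occ w Y \<le> occ w (u @ Y)"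
proof -
  define Pos where "Pos X = {i. i + length w \<le> length X \<and> take (length w) (drop i X) = w}" for X
  have finite_Pos: "finite (Pos X)" for X
    by (rule finite_subset[of _ "{..length X}"]) (auto simp: Pos_def)
  have "of_bool (u = w) + card (Pos Y)
      = card ((if u = w then {0} else {}) \<union> (\<lambda>i. i + length w) ` Pos Y)"
    using assms finite_Pos by (subst card_Un_disjoint) (auto simp: card_image)
  also have "\<dots> \<le> card (Pos (u @ Y))"
    by (rule card_mono[OF finite_Pos]) (use assms in \<open>auto simp: Pos_def\<close>)
  finally show ?thesis unfolding occ_def Pos_def .
qed

fun aligned_matches :: "nat list \<Rightarrow> nat \<Rightarrow> nat list \<Rightarrow> nat" where
  "aligned_matches w 0 X = 0"
| "aligned_matches w (Suc m) X =
     of_bool (take (length w) X = w) + aligned_matches w m (drop (length w) X)"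

lemma aligned_matches_le_occ:
  assumes "m * length w \<le> length X" "w \<noteq> []"
  shows "aligned_matches w m X \<le> occ w X"
  using assms(1)
proof (induction m arbitrary: X)
  case 0
  then show ?case by simp
next
  case (Suc m)
  have "aligned_matches w m (drop (length w) X) \<le> occ w (drop (length w) X)"
    using Suc by (intro Suc.IH) auto
  moreover have "of_bool (take (length w) X = w) + occ w (drop (length w) X)
      \<le> occ w (take (length w) X @ drop (length w) X)"
    using Suc.prems assms(2) by (intro occ_append_ge) auto
  ultimately show ?case by simp
qed

definition few_aligned_count :: "nat \<Rightarrow> nat list \<Rightarrow> nat \<Rightarrow> nat \<Rightarrow> nat \<Rightarrow> nat" where
  "few_aligned_count b w m r k =
     card {X \<in> strings b (m * length w + r). aligned_matches w m X \<le> k}"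

lemma few_aligned_count_0: "few_aligned_count b w 0 r k = b ^ r"
  by (simp add: few_aligned_count_def card_strings)

lemma few_aligned_count_Suc_le:
  assumes "set w \<subseteq> {..<b}"
  shows "few_aligned_count b w (Suc m) r k
    \<le> (if k = 0 then 0 else few_aligned_count b w m r (k - 1))
      + (b ^ length w - 1) * few_aligned_count b w m r k"
proof -
  define p where "p = length w"
  define S where "S = {X \<in> strings b (Suc m * p + r). aligned_matches w (Suc m) X \<le> k}"
  define A1 where "A1 = {Y \<in> strings b (m * p + r). aligned_matches w m Y + 1 \<le> k}"
  define A2 where "A2 = {Y \<in> strings b (m * p + r). aligned_matches w m Y \<le> k}"
  have finite_A: "finite A1" "finite A2"
    unfolding A1_def A2_def using finite_strings by auto
  have finite_U: "finite (strings b p - {w})"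
    using finite_strings by auto
  have "S \<subseteq> (\<lambda>Y. w @ Y) ` A1 \<union> (\<lambda>(u, Y). u @ Y) ` ((strings b p - {w}) \<times> A2)"
  proof
    fix X assume "X \<in> S"
    then have X: "length X = Suc m * p + r" "set X \<subseteq> {..<b}" "aligned_matches w (Suc m) X \<le> k"
      unfolding S_def strings_def by auto
    define u Y where "u = take p X" and "Y = drop p X"
    have "X = u @ Y" "u \<in> strings b p" "Y \<in> strings b (m * p + r)"
      unfolding u_def Y_def strings_def using X set_take_subset[of p X] set_drop_subset[of p X]
      by auto
    moreover have "aligned_matches w (Suc m) X = of_bool (u = w) + aligned_matches w m Y"
      unfolding u_def Y_def p_def by simp
    ultimately show
      "X \<in> (\<lambda>Y. w @ Y) ` A1 \<union> (\<lambda>(u, Y). u @ Y) ` ((strings b p - {w}) \<times> A2)"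
      using X(3) unfolding A1_def A2_def by (cases "u = w") force+
  qed
  then have "card S
      \<le> card ((\<lambda>Y. w @ Y) ` A1 \<union> (\<lambda>(u, Y). u @ Y) ` ((strings b p - {w}) \<times> A2))"
    by (rule card_mono[rotated]) (use finite_A finite_U in auto)
  also have "\<dots> \<le> card A1 + card ((strings b p - {w}) \<times> A2)"
    by (intro card_Un_le[THEN order.trans] add_mono card_image_le)
      (use finite_A finite_U in auto)
  also have "card ((strings b p - {w}) \<times> A2) = (b ^ p - 1) * card A2"
  proof -
    have "w \<in> strings b p"
      using assms unfolding strings_def p_def by auto
    then show ?thesis
      by (simp add: card_cartesian_product card_strings finite_strings)
  qed
  also have "card A1 = (if k = 0 then 0 else few_aligned_count b w m r (k - 1))"
    unfolding A1_def few_aligned_count_def p_def by (cases k) simp_all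
  finally show ?thesis
    unfolding S_def A2_def few_aligned_count_def p_def .
qed

lemma few_aligned_count_le:
  assumes "set w \<subseteq> {..<b}" "2 \<le> b ^ length w"
  shows "few_aligned_count b w m r k \<le> (m + 1) ^ k * (b ^ length w - 1) ^ m * b ^ r"
proof (induction m arbitrary: k)
  case 0
  then show ?case by (simp add: few_aligned_count_0)
next
  case (Suc m)
  define c where "c = b ^ length w - 1"
  have "1 \<le> c"
    using assms(2) unfolding c_def by simp
  have step: "few_aligned_count b w (Suc m) r k
      \<le> (if k = 0 then 0 else few_aligned_count b w m r (k - 1)) + c * few_aligned_count b w m r k"
    using few_aligned_count_Suc_le[OF assms(1)] unfolding c_def .
  have IH: "c * few_aligned_count b w m r k \<le> (m + 1) ^ k * c ^ Suc m * b ^ r"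
    using mult_left_mono[OF Suc.IH[of k], of c] unfolding c_def by (simp add: algebra_simps)
  show ?case
  proof (cases k)
    case 0
    then have "few_aligned_count b w (Suc m) r k \<le> c * few_aligned_count b w m r k"
      using step by simp
    also note IH
    finally show ?thesis
      using 0 unfolding c_def by simp
  next
    case (Suc j)
    have "few_aligned_count b w m r j \<le> (m + 1) ^ j * c ^ Suc m * b ^ r"
      using Suc.IH[of j] \<open>1 \<le> c\<close> unfolding c_def[symmetric]
      by (meson le_trans mult_le_mono order.refl power_increasing le_SucI)
    then have "few_aligned_count b w (Suc m) r k
        \<le> ((m + 1) ^ j + (m + 1) ^ Suc j) * (c ^ Suc m * b ^ r)"
      using step IH Suc by (simp add: algebra_simps)
    also have "(m + 1) ^ j + (m + 1) ^ Suc j = (m + 2) * (m + 1) ^ j"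
      by simp
    also have "\<dots> \<le> (m + 2) * (m + 2) ^ j"
      by (intro mult_left_mono power_mono) auto
    finally show ?thesis
      using Suc unfolding c_def[symmetric] by (simp add: mult.assoc)
  qed
qed

lemma sum_Ncount_le_few_aligned_count:
  assumes "w \<noteq> []"
  shows "(\<Sum>j\<le>k. Ncount b w j (m * length w + r)) \<le> few_aligned_count b w m r k"
proof -
  have "{X \<in> strings b (m * length w + r). occ w X \<le> k}
      \<subseteq> {X \<in> strings b (m * length w + r). aligned_matches w m X \<le> k}"
    by (auto simp: strings_def intro: order.trans[OF aligned_matches_le_occ[OF _ assms]])
  then show ?thesis
    unfolding sum_Ncount_atMost few_aligned_count_def
    by (intro card_mono) (simp_all add: finite_strings)
qed

definition few_aligned_fraction :: "nat \<Rightarrow> nat list \<Rightarrow> nat \<Rightarrow> nat \<Rightarrow> nat \<Rightarrow> real" where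
  "few_aligned_fraction b w m r k =
     real (few_aligned_count b w m r k) / real b ^ (m * length w + r)"

lemma few_aligned_fraction_Suc_le:
  assumes "set w \<subseteq> {..<b}" "1 \<le> b"
  defines "q \<equiv> 1 / real b ^ length w"
  shows "few_aligned_fraction b w (Suc m) r k
    \<le> q * (if k = 0 then 0 else few_aligned_fraction b w m r (k - 1))
      + (1 - q) * few_aligned_fraction b w m r k"
proof -
  define P B where "P = real b ^ length w" and "B = real b ^ (m * length w + r)"
  have "1 \<le> P" "0 < B"
    using assms unfolding P_def B_def by auto
  have "real (few_aligned_count b w (Suc m) r k)
      \<le> real ((if k = 0 then 0 else few_aligned_count b w m r (k - 1))
        + (b ^ length w - 1) * few_aligned_count b w m r k)"
    using few_aligned_count_Suc_le[OF assms(1)] by (simp only: of_nat_le_iff)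
  also have "\<dots> = (if k = 0 then 0 else real (few_aligned_count b w m r (k - 1)))
      + (P - 1) * real (few_aligned_count b w m r k)"
    using assms(2) unfolding P_def by (simp add: of_nat_diff)
  moreover have "real b ^ (Suc m * length w + r) = P * B"
    unfolding P_def B_def by (simp add: power_add)
  ultimately show ?thesis
    using \<open>1 \<le> P\<close> \<open>0 < B\<close>
    unfolding few_aligned_fraction_def q_def P_def[symmetric] B_def[symmetric]
    by (cases "k = 0") (simp_all add: field_simps)
qed

lemma sum_few_aligned_fraction_le:
  assumes "set w \<subseteq> {..<b}" "1 \<le> b"
  shows "(\<Sum>m<M. few_aligned_fraction b w m r k) \<le> (real k + 1) * real b ^ length w"
proof -
  define q where "q = 1 / real b ^ length w"
  have q: "0 < q" "q \<le> 1"
    using assms(2) by (auto simp: q_def)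
  have start: "few_aligned_fraction b w 0 r j \<le> 1" for j
    using assms(2) by (simp add: few_aligned_fraction_def few_aligned_count_0)
  have nonneg: "0 \<le> few_aligned_fraction b w m r j" for m j
    by (simp add: few_aligned_fraction_def)
  note step = few_aligned_fraction_Suc_le[OF assms, folded q_def]
  have "(\<Sum>m<M. few_aligned_fraction b w m r k) \<le> (real k + 1) / q"
  proof (induction k arbitrary: M)
    case 0
    show ?case
      using step[where k = 0] q start nonneg
      by (intro sum_lessThan_le_of_convex_step[where h = "\<lambda>_. 0"]) auto
  next
    case (Suc k)
    show ?case
      using step[where k = "Suc k"] q start nonneg Suc.IH
      by (intro sum_lessThan_le_of_convex_step[where h = "\<lambda>m. few_aligned_fraction b w m r k"])
        (auto simp: add.commute)
  qed
  then show ?thesis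
    by (simp add: q_def)
qed

lemma sum_Zval_inverse_le:
  assumes "w \<noteq> []" "set w \<subseteq> {..<b}" "1 \<le> b"
  shows "(\<Sum>j\<le>k. Zval b w j (1 / real b)) \<le> real (length w) * real (k + 1) * real b ^ length w"
proof -
  define p where "p = length w"
  define bound where "bound = real p * real (k + 1) * real b ^ p"
  define h where "h l = (\<Sum>j\<le>k. Zcoeff b w j l * (1 / real b) ^ l)" for l
  have h_nonneg: "0 \<le> h l" for l
    unfolding h_def Zcoeff_def by (simp add: sum_nonneg)
  have h_block: "h (m * p + r) \<le> few_aligned_fraction b w m r k" for m r
  proof -
    have "h (m * p + r) = real (\<Sum>j\<le>k. Ncount b w j (m * p + r)) / real b ^ (m * p + r)"
      unfolding h_def Zcoeff_def by (simp add: sum_divide_distrib power_one_over)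
    also have "\<dots> \<le> few_aligned_fraction b w m r k"
      unfolding few_aligned_fraction_def p_def
      using sum_Ncount_le_few_aligned_count[OF assms(1), where b = b and m = m and r = r and k = k]
      by (intro divide_right_mono) (simp only: of_nat_le_iff, simp)
    finally show ?thesis .
  qed
  have h_partial_sums: "sum h {..<n} \<le> bound" for n
  proof -
    have "sum h {..<n} \<le> sum h {..<n * p}"
      using assms(1) h_nonneg by (intro sum_mono2) (auto simp: p_def Suc_le_eq)
    also have "\<dots> = (\<Sum>m<n. \<Sum>r<p. h (m * p + r))"
      by (rule sum_lessThan_mult_eq)
    also have "\<dots> \<le> (\<Sum>m<n. \<Sum>r<p. few_aligned_fraction b w m r k)"
      using h_block by (intro sum_mono)
    also have "\<dots> = (\<Sum>r<p. \<Sum>m<n. few_aligned_fraction b w m r k)"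
      by (rule sum.swap)
    also have "\<dots> \<le> (\<Sum>r<p. (real k + 1) * real b ^ p)"
      using sum_few_aligned_fraction_le[OF assms(2,3)] unfolding p_def by (intro sum_mono)
    finally show ?thesis
      unfolding bound_def by (simp add: add.commute)
  qed
  have "summable h"
    using h_partial_sums[of "Suc _"] h_nonneg
    by (intro bounded_imp_summable[where B = bound]) (simp_all add: lessThan_Suc_atMost)
  then have "summable (\<lambda>l. Zcoeff b w j l * (1 / real b) ^ l)" if "j \<le> k" for j
    by (rule summable_comparison_test')
      (use that in \<open>auto simp: h_def Zcoeff_def intro!: member_le_sum\<close>)
  then have "(\<Sum>j\<le>k. Zval b w j (1 / real b)) = suminf h"
    unfolding Zval_def h_def by (intro suminf_sum[symmetric]) auto
  also have "\<dots> \<le> bound"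
    by (rule suminf_le_const[OF \<open>summable h\<close> h_partial_sums])
  finally show ?thesis
    unfolding bound_def p_def .
qed

lemma Zcoeff_le_poly_exp:
  assumes "w \<noteq> []" "set w \<subseteq> {..<b}" "2 \<le> b"
  defines "\<gamma> \<equiv> (real b ^ length w - 1) powr (1 / real (length w))"
  shows "Zcoeff b w k l \<le> real b ^ length w * (real (Suc l) ^ k * \<gamma> ^ l)"
proof -
  define p m r where "p = length w" and "m = l div p" and "r = l mod p"
  have "0 < p"
    using assms(1) by (simp add: p_def)
  have l_eq: "l = m * p + r"
    by (simp add: m_def r_def)
  have "b ^ 1 \<le> b ^ p"
    using assms(3) \<open>0 < p\<close> by (intro power_increasing) auto
  then have "2 \<le> b ^ p"
    using assms(3) by simp
  then have "real 2 \<le> real (b ^ p)"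
    by (simp only: of_nat_le_iff)
  then have C: "1 \<le> real b ^ p - 1"
    by simp
  have \<gamma>: "1 \<le> \<gamma>" "\<gamma> ^ p = real b ^ p - 1"
    using C \<open>0 < p\<close> unfolding \<gamma>_def p_def[symmetric]
    by (auto simp: powr_power ge_one_powr_ge_zero)
  have "Ncount b w k l \<le> (\<Sum>j\<le>k. Ncount b w j l)"
    by (rule member_le_sum) auto
  also have "\<dots> \<le> few_aligned_count b w m r k"
    using sum_Ncount_le_few_aligned_count[OF assms(1)] unfolding l_eq p_def .
  also have "\<dots> \<le> (m + 1) ^ k * (b ^ p - 1) ^ m * b ^ r"
    using few_aligned_count_le[OF assms(2)] \<open>2 \<le> b ^ p\<close> unfolding p_def .
  finally have "real (Ncount b w k l) \<le> real ((m + 1) ^ k * (b ^ p - 1) ^ m * b ^ r)"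
    by (simp only: of_nat_le_iff)
  also have "\<dots> = real (Suc m) ^ k * (\<gamma> ^ p) ^ m * real b ^ r"
    using \<open>2 \<le> b ^ p\<close> by (simp add: \<gamma>(2) of_nat_diff)
  also have "\<dots> \<le> real (Suc l) ^ k * \<gamma> ^ l * real b ^ p"
  proof (intro mult_mono)
    show "real (Suc m) ^ k \<le> real (Suc l) ^ k"
      by (intro power_mono) (auto simp: m_def)
    show "(\<gamma> ^ p) ^ m \<le> \<gamma> ^ l"
      unfolding power_mult[symmetric] using \<gamma>(1) by (intro power_increasing) (auto simp: l_eq)
    show "real b ^ r \<le> real b ^ p"
      using assms(3) \<open>0 < p\<close> by (intro power_increasing) (auto simp: r_def)
  qed (use \<gamma>(1) in auto)
  finally show ?thesis
    by (simp add: Zcoeff_def p_def algebra_simps)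
qed

lemma conv_radius_Zcoeff_ge:
  assumes "w \<noteq> []" "set w \<subseteq> {..<b}" "2 \<le> b"
  shows "ereal ((real b ^ length w - 1) powr (- 1 / real (length w))) \<le> conv_radius (Zcoeff b w k)"
proof -
  define \<gamma> where "\<gamma> = (real b ^ length w - 1) powr (1 / real (length w))"
  have "1 < real b ^ length w"
    using assms(1,3) by (intro one_less_power) auto
  then have "0 < \<gamma>"
    and inverse_\<gamma>: "(real b ^ length w - 1) powr (- 1 / real (length w)) = 1 / \<gamma>"
    unfolding \<gamma>_def by (simp_all add: powr_minus_divide)
  have "conv_radius (\<lambda>l. real b ^ length w * (real (Suc l) ^ k * \<gamma> ^ l))
      \<le> conv_radius (Zcoeff b w k)"
    using Zcoeff_le_poly_exp[OF assms, of k] \<open>0 < \<gamma>\<close>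
    by (intro conv_radius_le_of_norm_le) (simp add: Zcoeff_def \<gamma>_def)
  then show ?thesis
    unfolding inverse_\<gamma> using conv_radius_poly_exp \<open>0 < \<gamma>\<close> assms(3) by simp
qed

theorem lemma1:
  fixes b p :: nat and w :: "nat list"
  assumes "b \<ge> 2" and "p \<ge> 1" and "length w = p" and "set w \<subseteq> {..<b}"
  shows "(\<forall>k. conv_radius (Zcoeff b w k) \<ge> ereal ((real b ^ p - 1) powr (- 1 / real p)))
    \<and> (\<forall>k. (\<Sum>j\<le>k. Zval b w j (1 / real b)) \<le> real p * real (k + 1) * real b ^ p)"
proof -
  have "w \<noteq> []"
    using assms(2,3) by auto
  then show ?thesis
    using conv_radius_Zcoeff_ge sum_Zval_inverse_le assms by auto
qed

end
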